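(* If $\Delta\geq 4$, then the symmetric directed star satisfies $\chi'_{D_2}(\overleftrightarrow{K_{1,\Delta}})=\left\lceil 2\sqrt{\Delta}\right\rceil$.
   Context: For a simple graph $G$, the symmetric digraph $\overleftrightarrow{G}$ is obtained by replacing each edge $uv$ of $G$ by the pair of opposite arcs $\overrightarrow{uv}$ and $\overrightarrow{vu}$. A monochromatic 2-path is a pair of arcs $\overrightarrow{uv},\overrightarrow{vw}$ with $w\neq u$ of the same colour. An arc-colouring is distinguishing if the only automorphism of $\overleftrightarrow{G}$ preserving the colour of every arc is the identity. $\chi'_{D_2}(\overleftrightarrow{G})$ is the least number of colours in a distinguishing arc-colouring of $\overleftrightarrow{G}$ with no monochromatic 2-paths (monochromatic 2-cycles are allowed). *)

theory Defs
  imports Complex_Main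
begin

text \<open>A simple graph is given by a vertex set V and a symmetric irreflexive edge
relation E. The symmetric digraph has an arc (u,v) for every edge uv.\<close>

definition sym_arcs :: "'a set \<Rightarrow> ('a \<Rightarrow> 'a \<Rightarrow> bool) \<Rightarrow> ('a \<times> 'a) set" where
  "sym_arcs V E = {(u, v). u \<in> V \<and> v \<in> V \<and> E u v}"

definition is_digraph_aut :: "'a set \<Rightarrow> ('a \<Rightarrow> 'a \<Rightarrow> bool) \<Rightarrow> ('a \<Rightarrow> 'a) \<Rightarrow> bool" where
  "is_digraph_aut V E \<sigma> \<longleftrightarrow> bij_betw \<sigma> V V \<and>
     (\<forall>u\<in>V. \<forall>v\<in>V. (u, v) \<in> sym_arcs V E \<longleftrightarrow> (\<sigma> u, \<sigma> v) \<in> sym_arcs V E)"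

definition no_mono_2path :: "'a set \<Rightarrow> ('a \<Rightarrow> 'a \<Rightarrow> bool) \<Rightarrow> ('a \<times> 'a \<Rightarrow> nat) \<Rightarrow> bool" where
  "no_mono_2path V E c \<longleftrightarrow>
     (\<forall>u v w. (u, v) \<in> sym_arcs V E \<and> (v, w) \<in> sym_arcs V E \<and> w \<noteq> u \<longrightarrow> c (u, v) \<noteq> c (v, w))"

definition distinguishing_arc_col :: "'a set \<Rightarrow> ('a \<Rightarrow> 'a \<Rightarrow> bool) \<Rightarrow> ('a \<times> 'a \<Rightarrow> nat) \<Rightarrow> bool" where
  "distinguishing_arc_col V E c \<longleftrightarrow>
     (\<forall>\<sigma>. is_digraph_aut V E \<sigma> \<and> (\<forall>a\<in>sym_arcs V E. c (\<sigma> (fst a), \<sigma> (snd a)) = c a)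
          \<longrightarrow> (\<forall>v\<in>V. \<sigma> v = v))"

definition chi_D2 :: "'a set \<Rightarrow> ('a \<Rightarrow> 'a \<Rightarrow> bool) \<Rightarrow> nat" where
  "chi_D2 V E = (LEAST k. \<exists>c :: 'a \<times> 'a \<Rightarrow> nat.
      (\<forall>a\<in>sym_arcs V E. c a < k) \<and> no_mono_2path V E c \<and> distinguishing_arc_col V E c)"

definition star_vertices :: "nat \<Rightarrow> nat set" where
  "star_vertices \<Delta> = {0..\<Delta>}"

definition star_edge :: "nat \<Rightarrow> nat \<Rightarrow> bool" where
  "star_edge u v \<longleftrightarrow> (u = 0 \<and> v \<noteq> 0) \<or> (v = 0 \<and> u \<noteq> 0)"

end

theory Submission
  imports Defs
begin

text \<open>On the star every automorphism fixes the centre, so an arc-colouring is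
distinguishing exactly when the leaves receive pairwise distinct pairs
(colour of the in-arc, colour of the out-arc), and it has no monochromatic 2-path
exactly when no in-colour of one leaf equals the out-colour of another leaf.
Let I and O be the sets of in- and out-colours. A leaf whose in-colour lies in
O is determined by that colour, while any other leaf is determined by its pair in
(I - O) \<times> (O - I); hence with s = |I \<inter> O|, p = |I - O|, q = |O - I| we get
\<Delta> \<le> s + p q and k \<ge> s + p + q colours, so 4\<Delta> \<le> (s + p + q)^2 \<le> k^2 by AM-GM
(the AM-GM step needs s = 0 or s + 2(p + q) \<ge> 4, which \<Delta> \<ge> 4 guarantees).
Conversely, 4\<Delta> \<le> k^2 gives \<Delta> \<le> a b for a = k div 2 and b = k - a; colour the
in-arc of leaf i by (i - 1) mod a and its out-arc by a + (i - 1) div a, so that the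
pair of colours encodes the base-a digits of i - 1.\<close>

definition D2_colouring :: "'a set \<Rightarrow> ('a \<Rightarrow> 'a \<Rightarrow> bool) \<Rightarrow> nat \<Rightarrow> ('a \<times> 'a \<Rightarrow> nat) \<Rightarrow> bool" where
  "D2_colouring V E k c \<longleftrightarrow>
     (\<forall>a\<in>sym_arcs V E. c a < k) \<and> no_mono_2path V E c \<and> distinguishing_arc_col V E c"

lemma chi_D2_eqI:
  assumes "D2_colouring V E k c"
    and "\<And>k' c'. D2_colouring V E k' c' \<Longrightarrow> k \<le> k'"
  shows "chi_D2 V E = k"
  unfolding chi_D2_def D2_colouring_def[symmetric]
proof (rule Least_equality)
  show "\<exists>c. D2_colouring V E k c"
    using assms(1) by blast
  show "k \<le> k'" if "\<exists>c. D2_colouring V E k' c" for k'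
    using that assms(2) by blast
qed

lemma star_arc_iff:
  "(u, v) \<in> sym_arcs {0..\<Delta>} star_edge \<longleftrightarrow>
     u \<le> \<Delta> \<and> v \<le> \<Delta> \<and> (u = 0 \<and> v \<noteq> 0 \<or> v = 0 \<and> u \<noteq> 0)"
  by (auto simp: sym_arcs_def star_edge_def)

lemma star_aut_fixes_centre:
  assumes "2 \<le> \<Delta>" and "is_digraph_aut {0..\<Delta>} star_edge \<sigma>"
  shows "\<sigma> 0 = 0"
proof (rule ccontr)
  assume "\<sigma> 0 \<noteq> 0"
  have "(0, 1) \<in> sym_arcs {0..\<Delta>} star_edge" "(0, 2) \<in> sym_arcs {0..\<Delta>} star_edge"
    using assms(1) by (auto simp: star_arc_iff)
  then have "(\<sigma> 0, \<sigma> 1) \<in> sym_arcs {0..\<Delta>} star_edge" "(\<sigma> 0, \<sigma> 2) \<in> sym_arcs {0..\<Delta>} star_edge"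
    using assms unfolding is_digraph_aut_def by auto
  with \<open>\<sigma> 0 \<noteq> 0\<close> have "\<sigma> 1 = \<sigma> 2"
    by (simp add: star_arc_iff)
  moreover have "inj_on \<sigma> {0..\<Delta>}"
    using assms(2) by (simp add: is_digraph_aut_def bij_betw_def)
  ultimately show False
    using assms(1) by (auto dest: inj_onD)
qed

lemma star_aut_iff:
  assumes "2 \<le> \<Delta>"
  shows "is_digraph_aut {0..\<Delta>} star_edge \<sigma> \<longleftrightarrow> bij_betw \<sigma> {0..\<Delta>} {0..\<Delta>} \<and> \<sigma> 0 = 0"
proof
  assume "bij_betw \<sigma> {0..\<Delta>} {0..\<Delta>} \<and> \<sigma> 0 = 0"
  then have bij: "bij_betw \<sigma> {0..\<Delta>} {0..\<Delta>}" and "\<sigma> 0 = 0" by auto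
  have "\<sigma> u = 0 \<longleftrightarrow> u = 0" if "u \<in> {0..\<Delta>}" for u
    using inj_onD[OF bij_betw_imp_inj_on[OF bij], of u 0] that \<open>\<sigma> 0 = 0\<close> by auto
  then show "is_digraph_aut {0..\<Delta>} star_edge \<sigma>"
    using bij bij_betwE[OF bij] by (auto simp: is_digraph_aut_def star_arc_iff)
qed (use assms star_aut_fixes_centre in \<open>auto simp: is_digraph_aut_def\<close>)

lemma star_no_mono_2path_iff:
  "no_mono_2path {0..\<Delta>} star_edge c \<longleftrightarrow>
     (\<forall>i\<in>{1..\<Delta>}. \<forall>j\<in>{1..\<Delta>}. c (i, 0) = c (0, j) \<longrightarrow> i = j)"
proof
  assume no_mono: "no_mono_2path {0..\<Delta>} star_edge c"
  show "\<forall>i\<in>{1..\<Delta>}. \<forall>j\<in>{1..\<Delta>}. c (i, 0) = c (0, j) \<longrightarrow> i = j"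
  proof (intro ballI impI)
    fix i j
    assume "i \<in> {1..\<Delta>}" "j \<in> {1..\<Delta>}" "c (i, 0) = c (0, j)"
    moreover from this have "(i, 0) \<in> sym_arcs {0..\<Delta>} star_edge" "(0, j) \<in> sym_arcs {0..\<Delta>} star_edge"
      by (auto simp: star_arc_iff)
    ultimately show "i = j"
      using no_mono unfolding no_mono_2path_def by blast
  qed
next
  assume leaves: "\<forall>i\<in>{1..\<Delta>}. \<forall>j\<in>{1..\<Delta>}. c (i, 0) = c (0, j) \<longrightarrow> i = j"
  show "no_mono_2path {0..\<Delta>} star_edge c"
    unfolding no_mono_2path_def
  proof (intro allI impI)
    fix u v w
    assume "(u, v) \<in> sym_arcs {0..\<Delta>} star_edge \<and> (v, w) \<in> sym_arcs {0..\<Delta>} star_edge \<and> w \<noteq> u"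
    then have "v = 0" "u \<in> {1..\<Delta>}" "w \<in> {1..\<Delta>}" "w \<noteq> u"
      by (auto simp: star_arc_iff)
    with leaves show "c (u, v) \<noteq> c (v, w)"
      by blast
  qed
qed

lemma distinguishing_star_imp_inj_on_leaf_colours:
  assumes "2 \<le> \<Delta>" and "distinguishing_arc_col {0..\<Delta>} star_edge c"
  shows "inj_on (\<lambda>i. (c (i, 0), c (0, i))) {1..\<Delta>}"
proof (rule inj_onI)
  fix i j
  assume ij: "i \<in> {1..\<Delta>}" "j \<in> {1..\<Delta>}" "(c (i, 0), c (0, i)) = (c (j, 0), c (0, j))"
  define \<tau> where "\<tau> = id (i := j, j := i)"
  have "bij_betw \<tau> {0..\<Delta>} {0..\<Delta>}"
    using ij(1,2) by (intro bij_betw_byWitness[where f' = \<tau>]) (auto simp: \<tau>_def)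
  moreover have "\<tau> 0 = 0"
    using ij(1,2) by (simp add: \<tau>_def)
  moreover have "\<forall>a\<in>sym_arcs {0..\<Delta>} star_edge. c (\<tau> (fst a), \<tau> (snd a)) = c a"
    using ij by (auto simp: star_arc_iff \<tau>_def)
  ultimately have "\<forall>v\<in>{0..\<Delta>}. \<tau> v = v"
    using assms(2) unfolding distinguishing_arc_col_def star_aut_iff[OF assms(1)] by blast
  then have "\<tau> j = j"
    using ij(2) by simp
  then show "i = j"
    by (simp add: \<tau>_def)
qed

lemma inj_on_leaf_colours_imp_distinguishing_star:
  assumes "2 \<le> \<Delta>" and "inj_on (\<lambda>i. (c (i, 0), c (0, i))) {1..\<Delta>}"
  shows "distinguishing_arc_col {0..\<Delta>} star_edge c"
  unfolding distinguishing_arc_col_def star_aut_iff[OF assms(1)]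
proof (intro allI impI ballI)
  fix \<sigma> v
  assume \<sigma>: "(bij_betw \<sigma> {0..\<Delta>} {0..\<Delta>} \<and> \<sigma> 0 = 0) \<and>
    (\<forall>a\<in>sym_arcs {0..\<Delta>} star_edge. c (\<sigma> (fst a), \<sigma> (snd a)) = c a)"
    and v: "v \<in> {0..\<Delta>}"
  show "\<sigma> v = v"
  proof (cases "v = 0")
    case False
    have bij: "bij_betw \<sigma> {0..\<Delta>} {0..\<Delta>}" and "\<sigma> 0 = 0"
      and pres: "\<forall>a\<in>sym_arcs {0..\<Delta>} star_edge. c (\<sigma> (fst a), \<sigma> (snd a)) = c a"
      using \<sigma> by auto
    have "\<sigma> v \<in> {0..\<Delta>}"
      using bij_betwE[OF bij] v by blast
    moreover have "\<sigma> v \<noteq> \<sigma> 0"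
      using inj_onD[OF bij_betw_imp_inj_on[OF bij], of v 0] v False by auto
    ultimately have \<sigma>v: "\<sigma> v \<in> {1..\<Delta>}"
      using \<open>\<sigma> 0 = 0\<close> by auto
    have "(v, 0) \<in> sym_arcs {0..\<Delta>} star_edge" "(0, v) \<in> sym_arcs {0..\<Delta>} star_edge"
      using v False by (auto simp: star_arc_iff)
    then have "c (\<sigma> v, \<sigma> 0) = c (v, 0)" "c (\<sigma> 0, \<sigma> v) = c (0, v)"
      using pres by force+
    then have "(c (\<sigma> v, 0), c (0, \<sigma> v)) = (c (v, 0), c (0, v))"
      using \<open>\<sigma> 0 = 0\<close> by simp
    then show ?thesis
      using inj_onD[OF assms(2) _ \<sigma>v] v False by auto
  qed (use \<sigma> in simp)
qed

lemma card_le_common_plus_product: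
  assumes "finite L"
    and inj: "inj_on (\<lambda>i. (f i, g i)) L"
    and cross: "\<And>i j. i \<in> L \<Longrightarrow> j \<in> L \<Longrightarrow> f i = g j \<Longrightarrow> i = j"
  shows "card L \<le> card (f ` L \<inter> g ` L) + card (f ` L - g ` L) * card (g ` L - f ` L)"
proof -
  define L1 where "L1 = {i \<in> L. f i \<in> g ` L}"
  have "inj_on f L1"
  proof (rule inj_onI)
    fix i j
    assume "i \<in> L1" "j \<in> L1" "f i = f j"
    then obtain l where "l \<in> L" "f j = g l"
      by (auto simp: L1_def)
    with \<open>i \<in> L1\<close> \<open>j \<in> L1\<close> \<open>f i = f j\<close> have "i = l" "j = l"
      by (auto simp: L1_def intro: cross)
    then show "i = j"
      by simp
  qed
  moreover have "f ` L1 \<subseteq> f ` L \<inter> g ` L"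
    by (auto simp: L1_def)
  ultimately have "card L1 \<le> card (f ` L \<inter> g ` L)"
    using \<open>finite L\<close> card_mono[of "f ` L \<inter> g ` L" "f ` L1"] card_image[of f L1] by simp
  moreover have "(\<lambda>i. (f i, g i)) ` (L - L1) \<subseteq> (f ` L - g ` L) \<times> (g ` L - f ` L)"
  proof (rule image_subsetI)
    fix i
    assume "i \<in> L - L1"
    then have "i \<in> L" "f i \<notin> g ` L"
      by (simp_all add: L1_def)
    moreover have "g i \<notin> f ` L"
    proof
      assume "g i \<in> f ` L"
      then obtain l where "l \<in> L" "g i = f l"
        by auto
      with \<open>i \<in> L\<close> have "l = i"
        using cross[of l i] by simp
      with \<open>g i = f l\<close> have "f i = g i"
        by simp
      with \<open>i \<in> L\<close> \<open>f i \<notin> g ` L\<close> show False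
        by auto
    qed
    ultimately show "(f i, g i) \<in> (f ` L - g ` L) \<times> (g ` L - f ` L)"
      by auto
  qed
  then have "card ((\<lambda>i. (f i, g i)) ` (L - L1)) \<le> card ((f ` L - g ` L) \<times> (g ` L - f ` L))"
    using \<open>finite L\<close> by (intro card_mono) auto
  then have "card ((\<lambda>i. (f i, g i)) ` (L - L1)) \<le> card (f ` L - g ` L) * card (g ` L - f ` L)"
    by (simp only: card_cartesian_product)
  then have "card (L - L1) \<le> card (f ` L - g ` L) * card (g ` L - f ` L)"
    using card_image[OF inj_on_subset[OF inj Diff_subset]] by simp
  moreover have "card L = card L1 + card (L - L1)"
    using \<open>finite L\<close> card_Int_Diff[of L L1] by (simp add: L1_def Int_absorb1)
  ultimately show ?thesis
    by linarith
qed

lemma four_mul_le_sum_square: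
  fixes n s p q :: nat
  assumes "n \<le> s + p * q" and "4 \<le> n"
  shows "4 * n \<le> (s + p + q)\<^sup>2"
proof (cases "4 \<le> s + 2 * (p + q)")
  case True
  have "4 * (p * q) \<le> (p + q)\<^sup>2"
  proof -
    have "int (4 * (p * q)) \<le> int ((p + q)\<^sup>2)"
      using zero_le_power2[of "int p - int q"] by (simp add: power2_eq_square algebra_simps)
    then show ?thesis
      by linarith
  qed
  moreover have "4 * s \<le> s * (s + 2 * (p + q))"
    using True by (simp add: mult.commute)
  moreover have "(s + p + q)\<^sup>2 = s * (s + 2 * (p + q)) + (p + q)\<^sup>2"
    by (simp add: power2_eq_square algebra_simps)
  ultimately show ?thesis
    using assms(1) by linarith
next
  case False
  then have "p * q = 0" "s \<le> 3"
    by auto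
  with assms show ?thesis
    by linarith
qed

lemma star_colours_lower_bound:
  assumes "4 \<le> \<Delta>" and "D2_colouring {0..\<Delta>} star_edge k c"
  shows "4 * \<Delta> \<le> k\<^sup>2"
proof -
  define In where "In = (\<lambda>i. c (i, 0)) ` {1..\<Delta>}"
  define Out where "Out = (\<lambda>i. c (0, i)) ` {1..\<Delta>}"
  have bound: "\<forall>a\<in>sym_arcs {0..\<Delta>} star_edge. c a < k"
    and no_mono: "no_mono_2path {0..\<Delta>} star_edge c"
    and dist: "distinguishing_arc_col {0..\<Delta>} star_edge c"
    using assms(2) by (simp_all add: D2_colouring_def)
  have "inj_on (\<lambda>i. (c (i, 0), c (0, i))) {1..\<Delta>}"
    using assms(1) dist by (intro distinguishing_star_imp_inj_on_leaf_colours) simp_all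
  moreover have "\<And>i j. i \<in> {1..\<Delta>} \<Longrightarrow> j \<in> {1..\<Delta>} \<Longrightarrow> c (i, 0) = c (0, j) \<Longrightarrow> i = j"
    using no_mono unfolding star_no_mono_2path_iff by blast
  ultimately have "card {1..\<Delta>} \<le> card (In \<inter> Out) + card (In - Out) * card (Out - In)"
    unfolding In_def Out_def by (intro card_le_common_plus_product) simp_all
  then have "4 * \<Delta> \<le> (card (In \<inter> Out) + card (In - Out) + card (Out - In))\<^sup>2"
    using assms(1) by (intro four_mul_le_sum_square) simp_all
  also have "card (In \<inter> Out) + card (In - Out) + card (Out - In) = card (In \<union> Out)"
  proof -
    have "finite In" "finite Out"
      by (simp_all add: In_def Out_def)
    then have "card (In \<union> (Out - In)) = card In + card (Out - In)"
      by (intro card_Un_disjoint) auto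
    then show ?thesis
      using card_Int_Diff[OF \<open>finite In\<close>, of Out] by simp
  qed
  also have "card (In \<union> Out) \<le> k"
  proof -
    have "(i, 0) \<in> sym_arcs {0..\<Delta>} star_edge" "(0, i) \<in> sym_arcs {0..\<Delta>} star_edge"
      if "i \<in> {1..\<Delta>}" for i
      using that by (auto simp: star_arc_iff)
    with bound have "In \<union> Out \<subseteq> {0..<k}"
      by (auto simp: In_def Out_def)
    then have "card (In \<union> Out) \<le> card {0..<k}"
      by (intro card_mono) simp_all
    then show ?thesis
      by simp
  qed
  finally show ?thesis
    by (simp add: power_mono)
qed

definition star_grid_colouring :: "nat \<Rightarrow> nat \<times> nat \<Rightarrow> nat" where
  "star_grid_colouring a = (\<lambda>(u, v). if v = 0 then (u - 1) mod a else a + (v - 1) div a)"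

lemma star_grid_colouring_in [simp]: "star_grid_colouring a (u, 0) = (u - 1) mod a"
  by (simp add: star_grid_colouring_def)

lemma star_grid_colouring_out [simp]: "v \<noteq> 0 \<Longrightarrow> star_grid_colouring a (u, v) = a + (v - 1) div a"
  by (simp add: star_grid_colouring_def)

lemma star_grid_colouring_less:
  assumes "0 < a" and "\<Delta> \<le> a * b" and "x \<in> sym_arcs {0..\<Delta>} star_edge"
  shows "star_grid_colouring a x < a + b"
proof -
  obtain u v where x: "x = (u, v)" "v \<le> \<Delta>" "u = 0 \<and> v \<noteq> 0 \<or> v = 0"
    using assms(3) by (cases x) (auto simp: star_arc_iff)
  show ?thesis
  proof (cases "v = 0")
    case True
    with \<open>0 < a\<close> show ?thesis
      by (simp add: x trans_less_add1)
  next
    case False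
    with x(2) assms(2) have "v - 1 < b * a"
      by (simp add: mult.commute)
    then have "(v - 1) div a < b"
      by (rule less_mult_imp_div_less)
    with False show ?thesis
      by (simp add: x)
  qed
qed

lemma star_grid_colouring_no_mono_2path:
  assumes "0 < a"
  shows "no_mono_2path {0..\<Delta>} star_edge (star_grid_colouring a)"
  unfolding star_no_mono_2path_iff
proof (intro ballI impI)
  fix i j
  assume "i \<in> {1..\<Delta>}" "j \<in> {1..\<Delta>}"
    and "star_grid_colouring a (i, 0) = star_grid_colouring a (0, j)"
  then have "(i - 1) mod a = a + (j - 1) div a"
    by simp
  with \<open>0 < a\<close> show "i = j"
    using mod_less_divisor[of a "i - 1"] by linarith
qed

lemma star_grid_colouring_inj_on_leaf_colours:
  "inj_on (\<lambda>i. (star_grid_colouring a (i, 0), star_grid_colouring a (0, i))) {1..\<Delta>}"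
proof (rule inj_onI)
  fix i j
  assume "i \<in> {1..\<Delta>}" "j \<in> {1..\<Delta>}"
    and "(star_grid_colouring a (i, 0), star_grid_colouring a (0, i)) =
      (star_grid_colouring a (j, 0), star_grid_colouring a (0, j))"
  then have "(i - 1) mod a = (j - 1) mod a" "(i - 1) div a = (j - 1) div a" "1 \<le> i" "1 \<le> j"
    by auto
  then show "i = j"
    by (metis div_mult_mod_eq le_add_diff_inverse)
qed

lemma star_grid_colouring_D2_colouring:
  assumes "2 \<le> \<Delta>" and "\<Delta> \<le> a * b"
  shows "D2_colouring {0..\<Delta>} star_edge (a + b) (star_grid_colouring a)"
proof -
  have "0 < a"
    using assms by (cases "a = 0") auto
  with assms show ?thesis
    unfolding D2_colouring_def
    by (auto intro: star_grid_colouring_less star_grid_colouring_no_mono_2path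
        inj_on_leaf_colours_imp_distinguishing_star star_grid_colouring_inj_on_leaf_colours)
qed

lemma nat_ceiling_two_sqrt_le_iff:
  "nat \<lceil>2 * sqrt (real n)\<rceil> \<le> k \<longleftrightarrow> 4 * n \<le> k\<^sup>2"
proof -
  have "nat \<lceil>2 * sqrt (real n)\<rceil> \<le> k \<longleftrightarrow> sqrt (real (4 * n)) \<le> sqrt ((real k)\<^sup>2)"
    by (simp add: nat_le_iff ceiling_le_iff real_sqrt_mult)
  also have "\<dots> \<longleftrightarrow> 4 * n \<le> k\<^sup>2"
    by (simp only: real_sqrt_le_iff) (metis of_nat_le_iff of_nat_power)
  finally show ?thesis .
qed

lemma le_half_mul_half_if_four_mul_le_square:
  fixes n k :: nat
  assumes "4 * n \<le> k\<^sup>2"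
  shows "n \<le> k div 2 * (k - k div 2)"
proof -
  have "k\<^sup>2 \<le> 4 * (k div 2 * (k - k div 2)) + 1"
    by (cases "even k") (auto elim!: evenE oddE simp: power2_eq_square algebra_simps)
  with assms show ?thesis
    by linarith
qed

theorem mainTheorem8:
  fixes \<Delta> :: nat
  assumes "\<Delta> \<ge> 4"
  shows "chi_D2 (star_vertices \<Delta>) star_edge = nat \<lceil>2 * sqrt (real \<Delta>)\<rceil>"
proof -
  define K where "K = nat \<lceil>2 * sqrt (real \<Delta>)\<rceil>"
  have "4 * \<Delta> \<le> K\<^sup>2"
    using nat_ceiling_two_sqrt_le_iff[of \<Delta> K] by (simp add: K_def)
  then have "\<Delta> \<le> K div 2 * (K - K div 2)"
    by (rule le_half_mul_half_if_four_mul_le_square)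
  then have "D2_colouring {0..\<Delta>} star_edge K (star_grid_colouring (K div 2))"
    using star_grid_colouring_D2_colouring[of \<Delta> "K div 2" "K - K div 2"] assms by simp
  moreover have "K \<le> k" if "D2_colouring {0..\<Delta>} star_edge k c'" for k c'
    using star_colours_lower_bound[OF assms that] nat_ceiling_two_sqrt_le_iff by (simp add: K_def)
  ultimately show ?thesis
    unfolding star_vertices_def K_def by (rule chi_D2_eqI)
qed

end
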